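(* Let $X\in\mathbb{R}^{n\times p}$ with columns $X_1,\dots,X_p$, let $A$ be a symmetric $n\times n$ $0/1$ matrix, and let $\lambda_1,\lambda_2>0$. Consider the objective $$f(\Phi,D,\Theta)=-n\log\det D-p\log\det\Theta+\mathrm{Tr}(\Theta S(\Phi,D))+\lambda_1\|\Phi\|_1+\lambda_2\|\Theta\|_1,$$ where $\Phi=(\phi_{ij})_{p\times p}$ has columns $\phi_j$, $D=\mathrm{diag}(\rho_1^2,\dots,\rho_p^2)$ with $\rho_j>0$, $$S(\Phi,D)=\frac1p\sum_{j=1}^p(\rho_jX_j-X\phi_j)(\rho_jX_j-X\phi_j)^\top,$$ $\|\Phi\|_1=\sum_{i,j}|\phi_{ij}|$ and $\|\Theta\|_1=\sum_{i\neq j}|\theta_{ij}|$, on the domain where $\phi_{ij}=0$ whenever $j\le i$, each $\rho_j^2>0$, and $\Theta$ is an $n\times n$ positive definite matrix with $\Theta_{ij}=0$ whenever $i\ne j$ and $A_{ij}=0$, and $\mathrm{diag}(\Theta^{-1})=1$. Let $\{(\Phi,D,\Theta)^{(t)}:t=1,2,\dots\}$ be a sequence generated by block coordinate descent that cyclically minimizes $f$ exactly over the blocks $\Phi$, $D$, $\Theta$ in turn. Then for almost all $X\in\mathbb{R}^{n\times p}$ (with respect to Lebesgue measure), every cluster point of $\{(\Phi,D,\Theta)^{(t)}\}$ is a stationary point of $f$.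
   Context: A stationary point of $f$ is a point of its domain at which all directional derivatives of $f$ are nonnegative. The nodes of the DAG are assumed to be sorted in a natural (topological) ordering, so $\Phi$ is restricted to be strictly upper triangular. *)

theory Defs
  imports "HOL-Analysis.Analysis"
begin

text \<open>Matrices are Cartesian vectors: X :: real^'p^'n is an n x p matrix
(rows indexed by 'n, columns by 'p).  The diagonal matrix D = diag(rho_1^2,...,rho_p^2)
is represented by the vector d of its diagonal entries d_j = rho_j^2, rho_j = sqrt d_j.\<close>

definition diag_mat :: "real^'p \<Rightarrow> real^'p^'p" where
  "diag_mat d = (\<chi> i j. if i = j then d $ i else 0)"

definition outer :: "real^'n \<Rightarrow> real^'n \<Rightarrow> real^'n^'n" where
  "outer u v = (\<chi> a b. u $ a * v $ b)"

definition pos_def :: "real^'n^'n \<Rightarrow> bool" where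
  "pos_def M \<longleftrightarrow> transpose M = M \<and> (\<forall>x. x \<noteq> 0 \<longrightarrow> x \<bullet> (M *v x) > 0)"

definition S_mat :: "real^'p^'n \<Rightarrow> real^'p^'p \<Rightarrow> real^'p \<Rightarrow> real^'n^'n" where
  "S_mat X Phi d = (1 / real CARD('p)) *\<^sub>R
     (\<Sum>j\<in>UNIV. outer (sqrt (d $ j) *\<^sub>R column j X - X *v column j Phi)
                      (sqrt (d $ j) *\<^sub>R column j X - X *v column j Phi))"

definition objective ::
  "real^'p^'n \<Rightarrow> real \<Rightarrow> real \<Rightarrow> (real^'p^'p) \<times> (real^'p) \<times> (real^'n^'n) \<Rightarrow> real" where
  "objective X lam1 lam2 z = (case z of (Phi, d, Theta) \<Rightarrow>
      - real CARD('n) * ln (det (diag_mat d))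
      - real CARD('p) * ln (det Theta)
      + trace (Theta ** S_mat X Phi d)
      + lam1 * (\<Sum>i\<in>UNIV. \<Sum>j\<in>UNIV. \<bar>Phi $ i $ j\<bar>)
      + lam2 * (\<Sum>i\<in>UNIV. \<Sum>j\<in>UNIV. if i \<noteq> j then \<bar>Theta $ i $ j\<bar> else 0))"

text \<open>Feasible sets of the three blocks (natural ordering of the DAG nodes = the
order on 'p).\<close>
definition Phi_set :: "(real^('p::{finite,linorder})^('p::{finite,linorder})) set" where
  "Phi_set = {Phi. \<forall>i j. j \<le> i \<longrightarrow> Phi $ i $ j = 0}"

definition D_set :: "(real^'p) set" where
  "D_set = {d. \<forall>j. d $ j > 0}"

definition Theta_set :: "real^'n^'n \<Rightarrow> (real^'n^'n) set" where
  "Theta_set A = {Theta. pos_def Theta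
       \<and> (\<forall>i j. i \<noteq> j \<and> A $ i $ j = 0 \<longrightarrow> Theta $ i $ j = 0)
       \<and> (\<forall>i. matrix_inv Theta $ i $ i = 1)}"

definition dom_f :: "real^'n^'n \<Rightarrow> ((real^('p::{finite,linorder})^('p::{finite,linorder})) \<times> (real^('p::{finite,linorder})) \<times> (real^'n^'n)) set" where
  "dom_f A = Phi_set \<times> D_set \<times> Theta_set A"

definition f_ext where
  "f_ext X lam1 lam2 A z = (if z \<in> dom_f A then ereal (objective X lam1 lam2 z) else \<infinity>)"

definition stationary_point where
  "stationary_point X lam1 lam2 A z \<longleftrightarrow> z \<in> dom_f A \<and>
     (\<forall>v. 0 \<le> Liminf (at_right 0)
        (\<lambda>t::real. (f_ext X lam1 lam2 A (z + t *\<^sub>R v) - f_ext X lam1 lam2 A z) / ereal t))"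

definition bcd_sequence where
  "bcd_sequence X lam1 lam2 A (s :: nat \<Rightarrow> (real^('p::{finite,linorder})^('p::{finite,linorder})) \<times> (real^('p::{finite,linorder})) \<times> (real^'n^'n)) \<longleftrightarrow>
     s 0 \<in> dom_f A \<and>
     (\<forall>t. case s t of (Phi, d, Theta) \<Rightarrow> case s (Suc t) of (Phi', d', Theta') \<Rightarrow>
        Phi' \<in> Phi_set \<and>
        (\<forall>P\<in>Phi_set. objective X lam1 lam2 (Phi', d, Theta) \<le> objective X lam1 lam2 (P, d, Theta)) \<and>
        d' \<in> D_set \<and>
        (\<forall>e\<in>D_set. objective X lam1 lam2 (Phi', d', Theta) \<le> objective X lam1 lam2 (Phi', e, Theta)) \<and>
        Theta' \<in> Theta_set A \<and>
        (\<forall>T\<in>Theta_set A. objective X lam1 lam2 (Phi', d', Theta') \<le> objective X lam1 lam2 (Phi', d', T)))"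

definition cluster_point :: "(nat \<Rightarrow> 'a::topological_space) \<Rightarrow> 'a \<Rightarrow> bool" where
  "cluster_point s z \<longleftrightarrow> (\<exists>r. strict_mono r \<and> (s \<circ> r) \<longlonglongrightarrow> z)"

end

theory Submission
  imports Defs
begin

(* The argument works for every X.
   The blocks are coupled only through the smooth term tr(Theta S(Phi, D)), whose mixed differences
   are o(t); hence f(z + tv) - f(z) is the sum of the three single-block differences up to o(t), and a
   point minimizing f in each block separately is stationary.  Along a convergent subsequence of the
   iterates the log-barriers stay bounded because f decreases, so the limit lies in the domain, and
   the Theta- and Phi-optimality pass to the limit by continuity.  For D one passes to a further
   subsequence along which the next Phi-iterates converge (they are bounded by the lam1-penalty);
   their limit is another Phi-minimizer, and since Phi \<mapsto> f is strictly convex in the fitted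
   values X phi_j, both minimizers give the same objective for every D. *)

definition quad_form :: "real^'n^'n \<Rightarrow> real^'n \<Rightarrow> real" where
  "quad_form M x = x \<bullet> (M *v x)"

lemma tendsto_det [tendsto_intros]:
  "(A \<longlongrightarrow> A0) F \<Longrightarrow> ((\<lambda>x. det (A x :: real^'n^'n)) \<longlongrightarrow> det A0) F"
  unfolding det_def by (intro tendsto_intros)

lemma tendsto_quad_form [tendsto_intros]:
  "(M \<longlongrightarrow> M0) F \<Longrightarrow> (x \<longlongrightarrow> x0) F \<Longrightarrow> ((\<lambda>t. quad_form (M t) (x t)) \<longlongrightarrow> quad_form M0 x0) F"
  unfolding quad_form_def inner_vec_def matrix_vector_mult_def by (simp, intro tendsto_intros)

lemma quad_form_nonneg: "pos_def M \<Longrightarrow> 0 \<le> quad_form M x"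
  unfolding pos_def_def quad_form_def by (cases "x = 0") (auto intro: less_imp_le)

lemma quad_form_add:
  "quad_form M (x + y) = quad_form M x + quad_form M y + x \<bullet> (M *v y) + y \<bullet> (M *v x)"
  unfolding quad_form_def by (simp add: matrix_vector_right_distrib inner_add_left inner_add_right)

lemma quad_form_scaleR: "quad_form M (c *\<^sub>R x) = c\<^sup>2 * quad_form M x"
  unfolding quad_form_def by (simp add: matrix_vector_mult_scaleR power2_eq_square)

lemma quad_form_matrix_add: "quad_form (M + N) x = quad_form M x + quad_form N x"
  unfolding quad_form_def by (simp add: matrix_vector_mult_add_rdistrib inner_add_right)

lemma quad_form_matrix_scaleR: "quad_form (c *\<^sub>R M) x = c * quad_form M x"
  unfolding quad_form_def by (simp add: scaleR_matrix_vector_assoc[symmetric])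

lemma det_nonzero_if_quad_form_pos:
  assumes "\<And>x. x \<noteq> 0 \<Longrightarrow> 0 < quad_form M x"
  shows "det M \<noteq> 0"
proof -
  have "inj ((*v) M)"
  proof (rule injI)
    fix x y assume "M *v x = M *v y"
    then have "quad_form M (x - y) = 0"
      by (simp add: quad_form_def matrix_vector_mult_diff_distrib)
    with assms show "x = y" by (metis eq_iff_diff_eq_0 less_irrefl)
  qed
  then show ?thesis
    using det_nz_iff_inj_gen[of "(*v) M"] by (simp add: matrix_vector_mul_linear_gen)
qed

lemma det_pos_if_quad_form_pos:
  fixes M :: "real^'n^'n"
  assumes pos: "\<And>x. x \<noteq> 0 \<Longrightarrow> 0 < quad_form M x"
  shows "0 < det M"
proof (rule ccontr)
  assume "\<not> 0 < det M"
  \<comment> \<open>the segment from the identity to M stays positive definite, so det cannot change sign on it\<close>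
  define H where "H t = (1 - t) *\<^sub>R mat 1 + t *\<^sub>R M" for t :: real
  have "\<forall>t. 0 \<le> t \<and> t \<le> 1 \<longrightarrow> isCont (\<lambda>t. det (H t)) t"
    unfolding H_def isCont_def by (intro allI impI tendsto_intros)
  moreover have "det (H 0) = 1" "det (H 1) = det M" by (simp_all add: H_def)
  ultimately obtain t where t: "0 \<le> t" "t \<le> 1" "det (H t) = 0"
    using IVT2[of "\<lambda>t. det (H t)" 1 0 0] \<open>\<not> 0 < det M\<close> by auto
  have "0 < quad_form (H t) x" if "x \<noteq> 0" for x
  proof -
    have "quad_form (H t) x = (1 - t) * (x \<bullet> x) + t * quad_form M x"
      by (simp add: H_def quad_form_matrix_add quad_form_matrix_scaleR)
        (simp add: quad_form_def)
    moreover have "0 < x \<bullet> x" "0 < quad_form M x" using that pos by auto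
    ultimately show ?thesis using t
      by (cases "t = 0") (auto intro: add_nonneg_pos)
  qed
  with t show False using det_nonzero_if_quad_form_pos by blast
qed

lemma pos_def_det_pos: "pos_def M \<Longrightarrow> 0 < det M"
  by (rule det_pos_if_quad_form_pos) (auto simp: pos_def_def quad_form_def)

lemma eq_zero_if_quadratic_nonneg:
  fixes b c :: real
  assumes "\<And>s. 0 \<le> 2 * s * b + s\<^sup>2 * c" and "0 \<le> c"
  shows "b = 0"
proof -
  have "c + 1 \<noteq> 0" using assms(2) by simp
  have "0 \<le> 2 * (- b / (c + 1)) * b + (- b / (c + 1))\<^sup>2 * c" by (rule assms(1))
  also have "\<dots> = - (b\<^sup>2 * (c + 2)) / (c + 1)\<^sup>2"
    using \<open>c + 1 \<noteq> 0\<close> by (simp add: power_divide divide_simps) algebra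
  finally have "b\<^sup>2 * (c + 2) \<le> 0"
    using assms(2) by (simp add: divide_le_0_iff)
  then show ?thesis
    using assms(2) by (simp add: mult_le_0_iff)
qed

lemma pos_def_if_quad_form_nonneg:
  assumes sym: "transpose M = M" and nonneg: "\<And>x. 0 \<le> quad_form M x" and "det M \<noteq> 0"
  shows "pos_def M"
  unfolding pos_def_def
proof (intro conjI sym allI impI)
  fix x :: "real^'a" assume "x \<noteq> 0"
  show "0 < x \<bullet> (M *v x)"
  proof (rule ccontr)
    assume "\<not> 0 < x \<bullet> (M *v x)"
    then have x0: "quad_form M x = 0" using nonneg[of x] by (simp add: quad_form_def)
    define y where "y = M *v x"
    have "0 \<le> 2 * s * (y \<bullet> y) + s\<^sup>2 * quad_form M y" for s
    proof -
      have "x \<bullet> (M *v y) = y \<bullet> y"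
        by (metis sym dot_lmul_matrix vector_transpose_matrix y_def)
      then have "quad_form M (x + s *\<^sub>R y) = 2 * s * (y \<bullet> y) + s\<^sup>2 * quad_form M y"
        by (simp add: quad_form_add quad_form_scaleR x0 matrix_vector_mult_scaleR y_def)
      then show ?thesis using nonneg by metis
    qed
    then have "y \<bullet> y = 0" using nonneg by (rule eq_zero_if_quadratic_nonneg)
    then have "M *v x = 0" by (simp add: y_def)
    then show False
      using \<open>x \<noteq> 0\<close> \<open>det M \<noteq> 0\<close> det_nz_iff_inj_gen[of "(*v) M"]
      by (auto simp: matrix_vector_mul_linear_gen dest: injD[where x = x and y = 0])
  qed
qed

lemma matrix_inv_entry_cramer:
  fixes A :: "real^'n^'n"
  assumes "det A \<noteq> 0"
  shows "matrix_inv A $ k $ i = det (\<chi> a b. if b = k then mat 1 $ a $ i else A $ a $ b) / det A"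
proof -
  have "\<exists>B. A ** B = mat 1 \<and> B ** A = mat 1"
    using assms invertible_det_nz unfolding invertible_def by blast
  then have "A ** matrix_inv A = mat 1"
    unfolding matrix_inv_def by (rule someI_ex[THEN conjunct1])
  then have "(A ** matrix_inv A) $ a $ i = mat 1 $ a $ i" for a
    by simp
  then have "A *v column i (matrix_inv A) = column i (mat 1)"
    by (simp add: vec_eq_iff matrix_vector_mult_def column_def matrix_matrix_mult_def)
  then have "column i (matrix_inv A) = (\<chi> k. det (\<chi> a b. if b = k then column i (mat 1) $ a else A $ a $ b) / det A)"
    using cramer[OF assms] by blast
  then have "column i (matrix_inv A) $ k = det (\<chi> a b. if b = k then column i (mat 1) $ a else A $ a $ b) / det A"
    by (simp only: vec_lambda_beta)
  then show ?thesis
    by (simp only: column_def vec_lambda_beta)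
qed

lemma tendsto_matrix_inv_entry:
  fixes A :: "'b \<Rightarrow> real^'n^'n"
  assumes lim: "(A \<longlongrightarrow> A0) F" and "det A0 \<noteq> 0"
  shows "((\<lambda>x. matrix_inv (A x) $ k $ i) \<longlongrightarrow> matrix_inv A0 $ k $ i) F"
proof -
  let ?C = "\<lambda>M :: real^'n^'n. \<chi> a b. if b = k then mat 1 $ a $ i else M $ a $ b"
  have "((\<lambda>x. ?C (A x)) \<longlongrightarrow> ?C A0) F"
  proof (intro tendsto_vec_lambda)
    fix a b show "((\<lambda>x. if b = k then mat 1 $ a $ i else A x $ a $ b) \<longlongrightarrow>
        (if b = k then mat 1 $ a $ i else A0 $ a $ b)) F"
      by (cases "b = k") (simp_all add: tendsto_vec_nth lim)
  qed
  then have "((\<lambda>x. det (?C (A x)) / det (A x)) \<longlongrightarrow> matrix_inv A0 $ k $ i) F"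
    unfolding matrix_inv_entry_cramer[OF assms(2)] by (intro tendsto_divide tendsto_det lim assms(2))
  moreover have "eventually (\<lambda>x. det (A x) \<noteq> 0) F"
    using tendsto_det[OF lim] assms(2) by (rule tendsto_imp_eventually_ne)
  then have "eventually (\<lambda>x. det (?C (A x)) / det (A x) = matrix_inv (A x) $ k $ i) F"
    by eventually_elim (simp add: matrix_inv_entry_cramer)
  ultimately show ?thesis by (rule Lim_transform_eventually)
qed

lemma det_diag_mat: "det (diag_mat d) = (\<Prod>i\<in>UNIV. d $ i)"
  by (subst det_diagonal) (auto simp: diag_mat_def)

lemma tendsto_diag_mat [tendsto_intros]:
  "(d \<longlongrightarrow> d0) F \<Longrightarrow> ((\<lambda>x. diag_mat (d x)) \<longlongrightarrow> diag_mat d0) F"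
  unfolding diag_mat_def by (intro tendsto_vec_lambda) (auto intro!: tendsto_intros)

definition residual :: "real^'p^'n \<Rightarrow> real^'p^'p \<Rightarrow> real^'p \<Rightarrow> 'p \<Rightarrow> real^'n" where
  "residual X Phi d j = sqrt (d $ j) *\<^sub>R column j X - X *v column j Phi"

definition l1_norm :: "real^'a^'b \<Rightarrow> real" where
  "l1_norm M = (\<Sum>i\<in>UNIV. \<Sum>j\<in>UNIV. \<bar>M $ i $ j\<bar>)"

definition offdiag_l1_norm :: "real^'a^'a \<Rightarrow> real" where
  "offdiag_l1_norm M = (\<Sum>i\<in>UNIV. \<Sum>j\<in>UNIV. if i \<noteq> j then \<bar>M $ i $ j\<bar> else 0)"

lemma trace_mult_S_mat:
  fixes X :: "real^'p^'n"
  shows "trace (Theta ** S_mat X Phi d) = (\<Sum>j\<in>UNIV. quad_form Theta (residual X Phi d j)) / real CARD('p)"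
proof -
  let ?r = "residual X Phi d"
  have "trace (Theta ** S_mat X Phi d) = (\<Sum>i\<in>UNIV. \<Sum>k\<in>UNIV. \<Sum>j\<in>UNIV. Theta $ i $ k * (?r j $ k * ?r j $ i)) / real CARD('p)"
    unfolding S_mat_def residual_def[symmetric]
    by (simp add: trace_def matrix_matrix_mult_def outer_def sum_distrib_left sum_divide_distrib)
  also have "\<dots> = (\<Sum>j\<in>UNIV. \<Sum>i\<in>UNIV. \<Sum>k\<in>UNIV. ?r j $ i * (Theta $ i $ k * ?r j $ k)) / real CARD('p)"
    by (subst sum.swap, subst (2) sum.swap) (simp add: mult_ac)
  finally show ?thesis
    by (simp add: quad_form_def inner_vec_def matrix_vector_mult_def sum_distrib_left)
qed

lemma objective_eq:
  fixes X :: "real^'p^'n"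
  shows "objective X lam1 lam2 (Phi, d, Theta) =
    - real CARD('n) * ln (det (diag_mat d)) - real CARD('p) * ln (det Theta)
    + (\<Sum>j\<in>UNIV. quad_form Theta (residual X Phi d j)) / real CARD('p)
    + lam1 * l1_norm Phi + lam2 * offdiag_l1_norm Theta"
  unfolding objective_def trace_mult_S_mat l1_norm_def offdiag_l1_norm_def by simp

lemma tendsto_residual [tendsto_intros]:
  "(Phi \<longlongrightarrow> Phi0) F \<Longrightarrow> (d \<longlongrightarrow> d0) F \<Longrightarrow>
    ((\<lambda>t. residual X (Phi t) (d t) j) \<longlongrightarrow> residual X Phi0 d0 j) F"
  unfolding residual_def column_def matrix_vector_mult_def
  by (intro vec_tendstoI) (simp, intro tendsto_intros)

lemma tendsto_l1_norm [tendsto_intros]: "(M \<longlongrightarrow> M0) F \<Longrightarrow> ((\<lambda>t. l1_norm (M t)) \<longlongrightarrow> l1_norm M0) F"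
  unfolding l1_norm_def by (intro tendsto_intros)

lemma tendsto_offdiag_l1_norm [tendsto_intros]:
  "(M \<longlongrightarrow> M0) F \<Longrightarrow> ((\<lambda>t. offdiag_l1_norm (M t)) \<longlongrightarrow> offdiag_l1_norm M0) F"
  unfolding offdiag_l1_norm_def by (intro tendsto_sum) (auto intro!: tendsto_intros)

lemma tendsto_objective:
  fixes X :: "real^'p^'n"
  assumes "(Phi \<longlongrightarrow> Phi0) F" "(d \<longlongrightarrow> d0) F" "(Theta \<longlongrightarrow> Theta0) F"
    and "0 < det (diag_mat d0)" "0 < det Theta0"
  shows "((\<lambda>t. objective X lam1 lam2 (Phi t, d t, Theta t)) \<longlongrightarrow> objective X lam1 lam2 (Phi0, d0, Theta0)) F"
  unfolding objective_eq using assms by (intro tendsto_intros) auto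

lemma l1_norm_nonneg: "0 \<le> l1_norm M"
  by (simp add: l1_norm_def sum_nonneg)

lemma norm_le_l1_norm: "norm (M :: real^'a^'b) \<le> l1_norm M"
proof -
  have "norm M \<le> (\<Sum>i\<in>UNIV. norm (M $ i))"
    unfolding norm_vec_def by (rule L2_set_le_sum) simp
  also have "\<dots> \<le> l1_norm M"
    unfolding l1_norm_def by (intro sum_mono norm_le_l1_cart)
  finally show ?thesis .
qed

lemma objective_lower_bound:
  fixes X :: "real^'p^'n"
  assumes "pos_def Theta" and "0 \<le> lam2"
  shows "- real CARD('n) * ln (det (diag_mat d)) - real CARD('p) * ln (det Theta) + lam1 * l1_norm Phi
    \<le> objective X lam1 lam2 (Phi, d, Theta)"
proof -
  have "0 \<le> (\<Sum>j\<in>UNIV. quad_form Theta (residual X Phi d j)) / real CARD('p)"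
    using assms(1) by (intro divide_nonneg_nonneg sum_nonneg quad_form_nonneg) auto
  moreover have "0 \<le> lam2 * offdiag_l1_norm Theta"
    using assms(2) by (simp add: offdiag_l1_norm_def sum_nonneg)
  ultimately show ?thesis unfolding objective_eq by linarith
qed

lemma quad_form_midpoint:
  "quad_form M ((1/2) *\<^sub>R (x + y)) = (quad_form M x + quad_form M y) / 2 - quad_form M (x - y) / 4"
proof -
  have "quad_form M (x - y) = quad_form M x + quad_form M y - x \<bullet> (M *v y) - y \<bullet> (M *v x)"
    unfolding quad_form_def by (simp add: matrix_vector_mult_diff_distrib inner_diff_left inner_diff_right)
  then show ?thesis
    by (simp add: quad_form_scaleR quad_form_add matrix_vector_mult_scaleR power2_eq_square field_simps)
qed

lemma objective_midpoint_lt: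
  fixes X :: "real^'p^'n"
  assumes pd: "pos_def Theta" and "0 \<le> lam1" and fit: "X *v column j P1 \<noteq> X *v column j P2"
  shows "objective X lam1 lam2 ((1/2) *\<^sub>R (P1 + P2), d, Theta)
    < (objective X lam1 lam2 (P1, d, Theta) + objective X lam1 lam2 (P2, d, Theta)) / 2"
proof -
  let ?q = "\<lambda>P. (\<Sum>i\<in>UNIV. quad_form Theta (residual X P d i))"
  have "residual X ((1/2) *\<^sub>R (P1 + P2)) d i = (1/2) *\<^sub>R (residual X P1 d i + residual X P2 d i)" for i
    unfolding residual_def
    by (simp add: column_def vec_eq_iff matrix_vector_mult_def sum_distrib_left algebra_simps
        sum.distrib[symmetric])
  then have q_mid: "?q ((1/2) *\<^sub>R (P1 + P2)) = (?q P1 + ?q P2) / 2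
      - (\<Sum>i\<in>UNIV. quad_form Theta (residual X P1 d i - residual X P2 d i)) / 4"
    by (simp add: quad_form_midpoint sum_subtractf sum.distrib flip: sum_divide_distrib)
  have "residual X P1 d j - residual X P2 d j \<noteq> 0"
    using fit by (simp add: residual_def)
  then have "0 < quad_form Theta (residual X P1 d j - residual X P2 d j)"
    using pd by (simp add: pos_def_def quad_form_def)
  then have "0 < (\<Sum>i\<in>UNIV. quad_form Theta (residual X P1 d i - residual X P2 d i))"
    by (intro sum_pos2[where i = j]) (auto intro: quad_form_nonneg[OF pd])
  then have q_lt: "?q ((1/2) *\<^sub>R (P1 + P2)) < (?q P1 + ?q P2) / 2"
    unfolding q_mid by linarith
  have "l1_norm ((1/2) *\<^sub>R (P1 + P2)) \<le> (l1_norm P1 + l1_norm P2) / 2"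
    unfolding l1_norm_def
    by (simp add: sum.distrib[symmetric] sum_divide_distrib abs_triangle_ineq divide_right_mono sum_mono)
  then have l1_le: "lam1 * l1_norm ((1/2) *\<^sub>R (P1 + P2)) \<le> (lam1 * l1_norm P1 + lam1 * l1_norm P2) / 2"
    using mult_left_mono \<open>0 \<le> lam1\<close> by (fastforce simp: ring_distribs)
  define c where "c = lam2 * offdiag_l1_norm Theta - real CARD('n) * ln (det (diag_mat d)) - real CARD('p) * ln (det Theta)"
  have obj: "objective X lam1 lam2 (P, d, Theta) = ?q P / real CARD('p) + lam1 * l1_norm P + c" for P
    unfolding objective_eq c_def by simp
  have "?q ((1/2) *\<^sub>R (P1 + P2)) / real CARD('p) < (?q P1 / real CARD('p) + ?q P2 / real CARD('p)) / 2"
    using q_lt by (simp add: field_simps)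
  then have "?q ((1/2) *\<^sub>R (P1 + P2)) / real CARD('p) + lam1 * l1_norm ((1/2) *\<^sub>R (P1 + P2))
      < (?q P1 / real CARD('p) + ?q P2 / real CARD('p)) / 2 + (lam1 * l1_norm P1 + lam1 * l1_norm P2) / 2"
    using l1_le by (rule add_less_le_mono)
  then show ?thesis
    unfolding obj by (simp add: add_divide_distrib)
qed

lemma Phi_minimizers_agree:
  fixes X :: "real^'p::{finite,linorder}^'n"
  assumes pd: "pos_def Theta" and "0 \<le> lam1" and "P1 \<in> Phi_set" "P2 \<in> Phi_set"
    and min1: "\<forall>Q\<in>Phi_set. objective X lam1 lam2 (P1, d, Theta) \<le> objective X lam1 lam2 (Q, d, Theta)"
    and min2: "\<forall>Q\<in>Phi_set. objective X lam1 lam2 (P2, d, Theta) \<le> objective X lam1 lam2 (Q, d, Theta)"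
  shows "objective X lam1 lam2 (P1, e, Theta) = objective X lam1 lam2 (P2, e, Theta)"
proof -
  have eq: "objective X lam1 lam2 (P1, d, Theta) = objective X lam1 lam2 (P2, d, Theta)"
    using min1 min2 \<open>P1 \<in> Phi_set\<close> \<open>P2 \<in> Phi_set\<close> by (meson order_antisym)
  have "(1/2) *\<^sub>R (P1 + P2) \<in> Phi_set"
    using \<open>P1 \<in> Phi_set\<close> \<open>P2 \<in> Phi_set\<close> by (simp add: Phi_set_def)
  then have "X *v column j P1 = X *v column j P2" for j
    using objective_midpoint_lt[OF pd \<open>0 \<le> lam1\<close>, of X j P1 P2 lam2 d] min1 eq by fastforce
  then have "residual X P1 e j = residual X P2 e j" for e j
    by (simp add: residual_def)
  then show ?thesis
    using eq unfolding objective_eq by simp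
qed

lemma residual_perturb:
  "residual X (Phi + t *\<^sub>R V) (d + t *\<^sub>R W) j =
    residual X Phi d j + (sqrt (d $ j + t * W $ j) - sqrt (d $ j)) *\<^sub>R column j X - t *\<^sub>R (X *v column j V)"
  unfolding residual_def
  by (simp add: column_def vec_eq_iff matrix_vector_mult_def sum_distrib_left sum.distrib algebra_simps)

lemma quad_form_mixed_difference:
  "quad_form (M + t *\<^sub>R N) (r + a *\<^sub>R u - t *\<^sub>R w) - quad_form M (r - t *\<^sub>R w)
    - quad_form M (r + a *\<^sub>R u) - quad_form (M + t *\<^sub>R N) r + 2 * quad_form M r
   = t * (quad_form N (r + a *\<^sub>R u - t *\<^sub>R w) - quad_form N r - a * (u \<bullet> (M *v w) + w \<bullet> (M *v u)))"
  unfolding quad_form_def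
  by (simp add: matrix_vector_mult_add_rdistrib matrix_vector_right_distrib matrix_vector_mult_diff_distrib
      matrix_vector_mult_scaleR scaleR_matrix_vector_assoc[symmetric] inner_add_left inner_add_right
      inner_diff_left inner_diff_right algebra_simps)

lemma residual_mixed_difference:
  fixes X :: "real^'p^'n" and V1 :: "real^'p^'p" and d V2 :: "real^'p" and t :: real and j :: 'p
  defines "a \<equiv> sqrt (d $ j + t * V2 $ j) - sqrt (d $ j)"
    and "u \<equiv> column j X" and "w \<equiv> X *v column j V1"
  shows "quad_form (T + t *\<^sub>R V3) (residual X (P + t *\<^sub>R V1) (d + t *\<^sub>R V2) j)
      - quad_form T (residual X (P + t *\<^sub>R V1) d j) - quad_form T (residual X P (d + t *\<^sub>R V2) j)
      - quad_form (T + t *\<^sub>R V3) (residual X P d j) + 2 * quad_form T (residual X P d j)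
    = t * (quad_form V3 (residual X (P + t *\<^sub>R V1) (d + t *\<^sub>R V2) j) - quad_form V3 (residual X P d j)
      - a * (u \<bullet> (T *v w) + w \<bullet> (T *v u)))"
proof -
  have "column j (0 :: real^'p^'p) = 0"
    by (simp add: column_def vec_eq_iff)
  then have "residual X (P + t *\<^sub>R V1) d j = residual X P d j - t *\<^sub>R w"
    and "residual X P (d + t *\<^sub>R V2) j = residual X P d j + a *\<^sub>R u"
    using residual_perturb[of X P t V1 d 0 j] residual_perturb[of X P t 0 d V2 j]
    by (simp_all add: a_def u_def w_def)
  then show ?thesis
    unfolding a_def u_def w_def by (simp only: residual_perturb quad_form_mixed_difference)
qed

lemma objective_block_decomposition:
  fixes X :: "real^'p^'n" and lam1 lam2 :: real
  defines "f \<equiv> objective X lam1 lam2"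
  obtains G where "(G \<longlongrightarrow> 0) (at_right 0)"
    and "\<And>t. f (P + t *\<^sub>R V1, d + t *\<^sub>R V2, T + t *\<^sub>R V3) - f (P, d, T) =
      (f (P + t *\<^sub>R V1, d, T) - f (P, d, T)) + (f (P, d + t *\<^sub>R V2, T) - f (P, d, T))
      + (f (P, d, T + t *\<^sub>R V3) - f (P, d, T)) + t * G t"
proof
  let ?u = "\<lambda>j. column j X" and ?w = "\<lambda>j. X *v column j V1"
  define g where "g t j = quad_form V3 (residual X (P + t *\<^sub>R V1) (d + t *\<^sub>R V2) j)
    - quad_form V3 (residual X P d j)
    - (sqrt (d $ j + t * V2 $ j) - sqrt (d $ j)) * (?u j \<bullet> (T *v ?w j) + ?w j \<bullet> (T *v ?u j))" for t j
  define G where "G t = (\<Sum>j\<in>UNIV. g t j) / real CARD('p)" for t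
  have "((\<lambda>t. P + t *\<^sub>R V1) \<longlongrightarrow> P) (at_right 0)" "((\<lambda>t. d + t *\<^sub>R V2) \<longlongrightarrow> d) (at_right 0)"
    by (auto intro!: tendsto_eq_intros)
  then have "(G \<longlongrightarrow> G 0) (at_right 0)"
    unfolding G_def g_def by (intro tendsto_intros) auto
  then show "(G \<longlongrightarrow> 0) (at_right 0)"
    by (simp add: G_def g_def)
  fix t
  let ?A = "\<lambda>j. quad_form (T + t *\<^sub>R V3) (residual X (P + t *\<^sub>R V1) (d + t *\<^sub>R V2) j)"
  let ?B = "\<lambda>j. quad_form T (residual X (P + t *\<^sub>R V1) d j)"
  let ?D = "\<lambda>j. quad_form T (residual X P (d + t *\<^sub>R V2) j)"
  let ?E = "\<lambda>j. quad_form (T + t *\<^sub>R V3) (residual X P d j)"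
  let ?Q = "\<lambda>j. quad_form T (residual X P d j)"
  have "t * (\<Sum>j\<in>UNIV. g t j) = (\<Sum>j\<in>UNIV. ?A j - ?B j - ?D j - ?E j + 2 * ?Q j)"
    unfolding sum_distrib_left g_def residual_mixed_difference ..
  also have "\<dots> = sum ?A UNIV - sum ?B UNIV - sum ?D UNIV - sum ?E UNIV + 2 * sum ?Q UNIV"
    by (simp add: sum_subtractf sum.distrib sum_distrib_left)
  finally have "\<dots> = t * (\<Sum>j\<in>UNIV. g t j)" ..
  from arg_cong[where f = "\<lambda>x. x / real CARD('p)", OF this]
  have "trace ((T + t *\<^sub>R V3) ** S_mat X (P + t *\<^sub>R V1) (d + t *\<^sub>R V2)) - trace (T ** S_mat X (P + t *\<^sub>R V1) d)
      - trace (T ** S_mat X P (d + t *\<^sub>R V2)) - trace ((T + t *\<^sub>R V3) ** S_mat X P d)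
      + 2 * trace (T ** S_mat X P d) = t * G t"
    unfolding trace_mult_S_mat G_def by (simp add: diff_divide_distrib add_divide_distrib)
  then show "f (P + t *\<^sub>R V1, d + t *\<^sub>R V2, T + t *\<^sub>R V3) - f (P, d, T) =
      (f (P + t *\<^sub>R V1, d, T) - f (P, d, T)) + (f (P, d + t *\<^sub>R V2, T) - f (P, d, T))
      + (f (P, d, T + t *\<^sub>R V3) - f (P, d, T)) + t * G t"
    unfolding f_def objective_def by simp
qed

lemma Liminf_difference_quotient_nonneg:
  fixes h :: "real \<Rightarrow> ereal" and G :: "real \<Rightarrow> real"
  assumes "(G \<longlongrightarrow> 0) (at_right 0)" and "\<And>t. 0 < t \<Longrightarrow> ereal (t * G t) \<le> h t"
  shows "0 \<le> Liminf (at_right 0) (\<lambda>t. h t / ereal t)"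
  unfolding le_Liminf_iff
proof (intro allI impI)
  fix y :: ereal assume "y < 0"
  have "((\<lambda>t. ereal (G t)) \<longlongrightarrow> 0) (at_right 0)"
    using tendsto_ereal[OF assms(1)] by (simp add: zero_ereal_def)
  then have "eventually (\<lambda>t. y < ereal (G t)) (at_right 0)"
    using \<open>y < 0\<close> by (rule order_tendstoD)
  moreover have "eventually (\<lambda>t. 0 < t) (at_right (0 :: real))"
    by (rule eventually_at_right_less)
  ultimately show "eventually (\<lambda>t. y < h t / ereal t) (at_right 0)"
  proof eventually_elim
    case (elim t)
    then have "ereal (G t) \<le> h t / ereal t"
      using assms(2)[of t] by (simp add: ereal_le_divide_pos)
    with elim show ?case by (auto intro: less_le_trans)
  qed
qed

lemma stationary_point_if_blockwise_minimal:
  fixes X :: "real^'p::{finite,linorder}^'n" and lam1 lam2 :: real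
  defines "f \<equiv> objective X lam1 lam2"
  assumes z: "(P, d, T) \<in> dom_f A"
    and min_Phi: "\<forall>Q\<in>Phi_set. f (P, d, T) \<le> f (Q, d, T)"
    and min_D: "\<forall>e\<in>D_set. f (P, d, T) \<le> f (P, e, T)"
    and min_Theta: "\<forall>R\<in>Theta_set A. f (P, d, T) \<le> f (P, d, R)"
  shows "stationary_point X lam1 lam2 A (P, d, T)"
  unfolding stationary_point_def
proof (intro conjI allI z)
  fix v :: "(real^'p::{finite,linorder}^'p::{finite,linorder}) \<times> (real^'p::{finite,linorder}) \<times> (real^'n^'n)"
  obtain V1 V2 V3 where v: "v = (V1, V2, V3)" by (cases v)
  obtain G where G: "(G \<longlongrightarrow> 0) (at_right 0)" and decomp: "\<And>t. f (P + t *\<^sub>R V1, d + t *\<^sub>R V2, T + t *\<^sub>R V3) - f (P, d, T) =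
      (f (P + t *\<^sub>R V1, d, T) - f (P, d, T)) + (f (P, d + t *\<^sub>R V2, T) - f (P, d, T))
      + (f (P, d, T + t *\<^sub>R V3) - f (P, d, T)) + t * G t"
    unfolding f_def by (rule objective_block_decomposition[of X lam1 lam2 P V1 d V2 T V3]) blast
  show "0 \<le> Liminf (at_right 0)
      (\<lambda>t. (f_ext X lam1 lam2 A ((P, d, T) + t *\<^sub>R v) - f_ext X lam1 lam2 A (P, d, T)) / ereal t)"
  proof (rule Liminf_difference_quotient_nonneg[OF G])
    fix t :: real
    have fz: "f_ext X lam1 lam2 A (P, d, T) = ereal (f (P, d, T))"
      using z by (simp add: f_ext_def f_def)
    show "ereal (t * G t) \<le> f_ext X lam1 lam2 A ((P, d, T) + t *\<^sub>R v) - f_ext X lam1 lam2 A (P, d, T)"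
    proof (cases "(P + t *\<^sub>R V1, d + t *\<^sub>R V2, T + t *\<^sub>R V3) \<in> dom_f A")
      case True
      then have "f (P, d, T) \<le> f (P + t *\<^sub>R V1, d, T)" "f (P, d, T) \<le> f (P, d + t *\<^sub>R V2, T)"
        "f (P, d, T) \<le> f (P, d, T + t *\<^sub>R V3)"
        using min_Phi min_D min_Theta by (auto simp: dom_f_def)
      then have "t * G t \<le> f (P + t *\<^sub>R V1, d + t *\<^sub>R V2, T + t *\<^sub>R V3) - f (P, d, T)"
        using decomp[of t] by linarith
      with True z show ?thesis
        by (simp add: v f_ext_def f_def)
    next
      case False
      then show ?thesis by (simp add: v fz f_ext_def)
    qed
  qed
qed

lemma closed_Phi_set: "closed Phi_set"
  unfolding Phi_set_def
  by (intro closed_Collect_all closed_Collect_imp closed_Collect_eq continuous_intros open_Collect_const)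

lemma Theta_set_limit:
  fixes T :: "nat \<Rightarrow> real^'n^'n"
  assumes lim: "T \<longlonglongrightarrow> T0" and T: "\<And>k. T k \<in> Theta_set A" and "0 < det T0"
  shows "T0 \<in> Theta_set A"
proof -
  have entry: "(\<lambda>k. T k $ i $ j) \<longlonglongrightarrow> T0 $ i $ j" for i j
    using lim by (intro tendsto_vec_nth)
  have pd: "pos_def (T k)" for k
    using T by (simp add: Theta_set_def)
  have "T0 $ i $ j = T0 $ j $ i" for i j
  proof -
    have "transpose (T k) $ j $ i = T k $ j $ i" for k
      using pd[of k] by (simp add: pos_def_def)
    then have "(\<lambda>k. T k $ i $ j) \<longlonglongrightarrow> T0 $ j $ i"
      using entry[of j i] by (simp add: transpose_def)
    then show ?thesis
      using entry[of i j] LIMSEQ_unique by blast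
  qed
  then have sym: "transpose T0 = T0"
    by (simp add: vec_eq_iff transpose_def)
  have "0 \<le> quad_form T0 x" for x
    using lim by (intro tendsto_lowerbound[of "\<lambda>k. quad_form (T k) x"]) (auto intro!: tendsto_intros always_eventually quad_form_nonneg pd)
  then have "pos_def T0"
    using sym \<open>0 < det T0\<close> by (intro pos_def_if_quad_form_nonneg) auto
  moreover have "T0 $ i $ j = 0" if "i \<noteq> j" "A $ i $ j = 0" for i j
    using entry[of i j] T that by (simp add: Theta_set_def LIMSEQ_const_iff)
  moreover have "matrix_inv T0 $ i $ i = 1" for i
    using tendsto_matrix_inv_entry[OF lim, of i i] \<open>0 < det T0\<close> T
    by (simp add: Theta_set_def LIMSEQ_const_iff)
  ultimately show ?thesis
    unfolding Theta_set_def by blast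
qed

lemma pos_if_ln_bounded_below:
  fixes x g :: "nat \<Rightarrow> real"
  assumes "x \<longlonglongrightarrow> x0" "g \<longlonglongrightarrow> L" and "\<And>k. 0 < x k" "\<And>k. g k \<le> ln (x k)"
  shows "0 < x0"
proof -
  have "eventually (\<lambda>k. L - 1 < g k) sequentially"
    using assms(2) by (rule order_tendstoD) simp
  then have "eventually (\<lambda>k. exp (L - 1) \<le> x k) sequentially"
  proof eventually_elim
    case (elim k)
    then have "exp (L - 1) \<le> exp (ln (x k))"
      using assms(4)[of k] by simp
    then show ?case using assms(3)[of k] by simp
  qed
  then have "exp (L - 1) \<le> x0"
    using assms(1) by (intro tendsto_lowerbound) auto
  then show ?thesis
    using exp_gt_zero less_le_trans by blast
qed

locale bcd_run =
  fixes X :: "real^'p::{finite,linorder}^'n" and lam1 lam2 :: real and A :: "real^'n^'n"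
    and P :: "nat \<Rightarrow> real^'p::{finite,linorder}^'p::{finite,linorder}"
    and D :: "nat \<Rightarrow> real^'p::{finite,linorder}" and T :: "nat \<Rightarrow> real^'n^'n"
  assumes lam1_pos: "0 < lam1" and lam2_pos: "0 < lam2"
    and bcd: "bcd_sequence X lam1 lam2 A (\<lambda>t. (P t, D t, T t))"
begin

abbreviation f where "f \<equiv> objective X lam1 lam2"

definition F :: "nat \<Rightarrow> real" where
  "F t = f (P t, D t, T t)"

lemma Phi_step: "P (Suc t) \<in> Phi_set" "Q \<in> Phi_set \<Longrightarrow> f (P (Suc t), D t, T t) \<le> f (Q, D t, T t)"
  using bcd unfolding bcd_sequence_def by auto

lemma D_step: "D (Suc t) \<in> D_set" "e \<in> D_set \<Longrightarrow> f (P (Suc t), D (Suc t), T t) \<le> f (P (Suc t), e, T t)"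
  using bcd unfolding bcd_sequence_def by auto

lemma Theta_step: "T (Suc t) \<in> Theta_set A" "R \<in> Theta_set A \<Longrightarrow> F (Suc t) \<le> f (P (Suc t), D (Suc t), R)"
  using bcd unfolding bcd_sequence_def F_def by auto

lemma in_dom: "P t \<in> Phi_set" "D t \<in> D_set" "T t \<in> Theta_set A"
  using bcd Phi_step(1) D_step(1) Theta_step(1) by (cases t; auto simp: bcd_sequence_def dom_f_def)+

lemma F_Suc_le: "F (Suc t) \<le> f (P (Suc t), D (Suc t), T t)" "f (P (Suc t), D (Suc t), T t) \<le> f (P (Suc t), D t, T t)"
  "f (P (Suc t), D t, T t) \<le> F t"
  using Theta_step(2) D_step(2) Phi_step(2) in_dom by (auto simp: F_def)

lemma decseq_F: "decseq F"
  using F_Suc_le by (intro decseq_SucI) (meson order_trans)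

lemma F_le_F0: "F t \<le> F 0"
  using decseq_F by (simp add: decseq_def)

lemma barrier_penalty_le_F0:
  "- real CARD('n) * ln (det (diag_mat (D t))) - real CARD('p) * ln (det (T t)) + lam1 * l1_norm (P (Suc t)) \<le> F 0"
proof -
  have "pos_def (T t)" using in_dom(3) by (simp add: Theta_set_def)
  then have "- real CARD('n) * ln (det (diag_mat (D t))) - real CARD('p) * ln (det (T t)) + lam1 * l1_norm (P (Suc t))
      \<le> f (P (Suc t), D t, T t)"
    using lam2_pos by (intro objective_lower_bound) auto
  also have "\<dots> \<le> F 0"
    using F_Suc_le(3) F_le_F0 by (rule order_trans)
  finally show ?thesis .
qed

lemma log_barrier_le_F0:
  "- real CARD('n) * (\<Sum>i\<in>UNIV. ln (D t $ i)) - real CARD('p) * ln (det (T t)) \<le> F 0"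
proof -
  have "pos_def (T t)" using in_dom(3) by (simp add: Theta_set_def)
  then have "- real CARD('n) * ln (det (diag_mat (D t))) - real CARD('p) * ln (det (T t)) + lam1 * l1_norm (P t) \<le> F t"
    unfolding F_def using lam2_pos by (intro objective_lower_bound) auto
  moreover have "ln (det (diag_mat (D t))) = (\<Sum>i\<in>UNIV. ln (D t $ i))"
    using in_dom(2)[of t] by (simp add: det_diag_mat D_set_def ln_prod less_imp_neq[symmetric])
  moreover have "0 \<le> lam1 * l1_norm (P t)"
    using lam1_pos l1_norm_nonneg[of "P t"] by simp
  ultimately show ?thesis
    using F_le_F0[of t] by simp
qed

end

locale bcd_limit = bcd_run X lam1 lam2 A P D T
  for X :: "real^'p::{finite,linorder}^'n" and lam1 lam2 A P D T +
  fixes r :: "nat \<Rightarrow> nat" and Ps ds Ts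
  assumes r: "strict_mono r"
    and lim_P: "(\<lambda>k. P (r k)) \<longlonglongrightarrow> Ps" and lim_D: "(\<lambda>k. D (r k)) \<longlonglongrightarrow> ds"
    and lim_T: "(\<lambda>k. T (r k)) \<longlonglongrightarrow> Ts"
begin

lemma ln_le_minus_one_iterates:
  "ln (D t $ i) \<le> D t $ i - 1" "ln (det (T t)) \<le> det (T t) - 1"
  using in_dom(2,3) by (auto intro!: ln_le_minus_one pos_def_det_pos simp: D_set_def Theta_set_def)

lemma ds_in_D_set: "ds \<in> D_set"
  unfolding D_set_def mem_Collect_eq
proof
  fix j :: 'p
  let ?n = "real CARD('n)" and ?p = "real CARD('p)"
  let ?g = "\<lambda>M d. (- F 0 - ?p * (det M - 1) - ?n * (\<Sum>i\<in>UNIV - {j}. d $ i - 1)) / ?n"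
  show "0 < ds $ j"
  proof (rule pos_if_ln_bounded_below)
    show "(\<lambda>k. D (r k) $ j) \<longlonglongrightarrow> ds $ j" "0 < D (r k) $ j" for k
      using lim_D in_dom(2) by (auto intro: tendsto_vec_nth simp: D_set_def)
    show "(\<lambda>k. ?g (T (r k)) (D (r k))) \<longlonglongrightarrow> ?g Ts ds"
      using lim_D lim_T by (intro tendsto_intros) auto
    fix k
    let ?t = "r k"
    have "(\<Sum>i\<in>UNIV. ln (D ?t $ i)) = ln (D ?t $ j) + (\<Sum>i\<in>UNIV - {j}. ln (D ?t $ i))"
      by (rule sum.remove) auto
    then have "- F 0 \<le> ?n * ln (D ?t $ j) + ?n * (\<Sum>i\<in>UNIV - {j}. ln (D ?t $ i)) + ?p * ln (det (T ?t))"
      using log_barrier_le_F0[of ?t] by (simp add: algebra_simps)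
    moreover have "?n * (\<Sum>i\<in>UNIV - {j}. ln (D ?t $ i)) \<le> ?n * (\<Sum>i\<in>UNIV - {j}. D ?t $ i - 1)"
      by (intro mult_left_mono sum_mono ln_le_minus_one_iterates) auto
    moreover have "?p * ln (det (T ?t)) \<le> ?p * (det (T ?t) - 1)"
      by (intro mult_left_mono ln_le_minus_one_iterates) auto
    ultimately have "- F 0 - ?p * (det (T ?t) - 1) - ?n * (\<Sum>i\<in>UNIV - {j}. D ?t $ i - 1) \<le> ?n * ln (D ?t $ j)"
      by linarith
    then show "?g (T ?t) (D ?t) \<le> ln (D ?t $ j)"
      by (simp add: divide_le_eq mult.commute)
  qed
qed

lemma det_Ts_pos: "0 < det Ts"
proof -
  let ?n = "real CARD('n)" and ?p = "real CARD('p)"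
  let ?g = "\<lambda>d. (- F 0 - ?n * (\<Sum>i\<in>UNIV. d $ i - 1)) / ?p"
  show ?thesis
  proof (rule pos_if_ln_bounded_below)
    show "(\<lambda>k. det (T (r k))) \<longlonglongrightarrow> det Ts" "0 < det (T (r k))" for k
      using lim_T in_dom(3) by (auto intro: tendsto_det pos_def_det_pos simp: Theta_set_def)
    show "(\<lambda>k. ?g (D (r k))) \<longlonglongrightarrow> ?g ds"
      using lim_D by (intro tendsto_intros) auto
    fix k
    let ?t = "r k"
    have "?n * (\<Sum>i\<in>UNIV. ln (D ?t $ i)) \<le> ?n * (\<Sum>i\<in>UNIV. D ?t $ i - 1)"
      by (intro mult_left_mono sum_mono ln_le_minus_one_iterates) auto
    then have "- F 0 - ?n * (\<Sum>i\<in>UNIV. D ?t $ i - 1) \<le> ?p * ln (det (T ?t))"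
      using log_barrier_le_F0[of ?t] by linarith
    then show "?g (D ?t) \<le> ln (det (T ?t))"
      by (simp add: divide_le_eq mult.commute)
  qed
qed

lemma Ts_in_Theta_set: "Ts \<in> Theta_set A"
  using lim_T in_dom(3) det_Ts_pos by (rule Theta_set_limit)

lemma Ps_in_Phi_set: "Ps \<in> Phi_set"
  by (rule closed_sequentially[OF closed_Phi_set _ lim_P]) (simp add: in_dom)

lemma det_diag_ds_pos: "0 < det (diag_mat ds)"
  using ds_in_D_set by (simp add: det_diag_mat D_set_def prod_pos)

lemma limit_in_dom: "(Ps, ds, Ts) \<in> dom_f A"
  using Ps_in_Phi_set ds_in_D_set Ts_in_Theta_set by (simp add: dom_f_def)

lemma F_subseq_tendsto: "(\<lambda>k. F (r k)) \<longlonglongrightarrow> f (Ps, ds, Ts)"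
  unfolding F_def using lim_P lim_D lim_T det_diag_ds_pos det_Ts_pos by (rule tendsto_objective)

lemma limit_le_F: "f (Ps, ds, Ts) \<le> F t"
proof (rule tendsto_upperbound[OF F_subseq_tendsto])
  show "eventually (\<lambda>k. F (r k) \<le> F t) sequentially"
    using eventually_ge_at_top[of t]
  proof eventually_elim
    case (elim k)
    then have "t \<le> r k" using seq_suble[OF r, of k] by simp
    then show ?case using decseq_F by (simp add: decseq_def)
  qed
qed simp

lemma limit_le_before_Theta_step: "f (Ps, ds, Ts) \<le> f (P (Suc t), D (Suc t), T t)"
  using limit_le_F[of "Suc t"] F_Suc_le(1) by (rule order_trans)

lemma Theta_block_minimal:
  assumes "R \<in> Theta_set A"
  shows "f (Ps, ds, Ts) \<le> f (Ps, ds, R)"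
proof (rule tendsto_le[OF _ _ F_subseq_tendsto])
  have "0 < det R" using assms by (simp add: Theta_set_def pos_def_det_pos)
  then show "(\<lambda>k. f (P (r k), D (r k), R)) \<longlonglongrightarrow> f (Ps, ds, R)"
    using lim_P lim_D det_diag_ds_pos by (intro tendsto_objective) auto
  show "eventually (\<lambda>k. F (r k) \<le> f (P (r k), D (r k), R)) sequentially"
    using eventually_ge_at_top[of 1]
  proof eventually_elim
    case (elim k)
    then have "r k \<noteq> 0"
      using seq_suble[OF r, of k] by linarith
    then obtain t where "r k = Suc t"
      using not0_implies_Suc by blast
    then show ?case using Theta_step(2) assms by simp
  qed
qed simp

lemma Phi_block_minimal:
  assumes "Q \<in> Phi_set"
  shows "f (Ps, ds, Ts) \<le> f (Q, ds, Ts)"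
proof (rule tendsto_lowerbound)
  show "(\<lambda>k. f (Q, D (r k), T (r k))) \<longlonglongrightarrow> f (Q, ds, Ts)"
    using lim_D lim_T det_diag_ds_pos det_Ts_pos by (intro tendsto_objective) auto
  show "eventually (\<lambda>k. f (Ps, ds, Ts) \<le> f (Q, D (r k), T (r k))) sequentially"
  proof (intro always_eventually allI)
    fix k
    have "f (Ps, ds, Ts) \<le> f (P (Suc (r k)), D (r k), T (r k))"
      using limit_le_before_Theta_step F_Suc_le(2) by (rule order_trans)
    also have "\<dots> \<le> f (Q, D (r k), T (r k))"
      using Phi_step(2)[OF assms] .
    finally show "f (Ps, ds, Ts) \<le> f (Q, D (r k), T (r k))" .
  qed
qed simp

lemma Phi_step_subseq_converges:
  obtains g Pp where "strict_mono g" and "(\<lambda>k. P (Suc (r (g k)))) \<longlonglongrightarrow> Pp"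
proof -
  let ?h = "\<lambda>k. real CARD('n) * ln (det (diag_mat (D (r k)))) + real CARD('p) * ln (det (T (r k)))"
  have "?h \<longlonglongrightarrow> real CARD('n) * ln (det (diag_mat ds)) + real CARD('p) * ln (det Ts)"
    using lim_D lim_T det_diag_ds_pos det_Ts_pos by (intro tendsto_intros) auto
  then have "Bseq ?h"
    by (intro convergent_imp_Bseq convergentI)
  then obtain K where K: "\<And>k. norm (?h k) \<le> K"
    unfolding Bseq_def by blast
  have "norm (P (Suc (r k))) \<le> (F 0 + K) / lam1" for k
  proof -
    have "lam1 * l1_norm (P (Suc (r k))) \<le> F 0 + K"
      using barrier_penalty_le_F0[of "r k"] K[of k] by simp
    then have "l1_norm (P (Suc (r k))) \<le> (F 0 + K) / lam1"
      using lam1_pos by (simp add: le_divide_eq mult.commute)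
    then show ?thesis
      using norm_le_l1_norm[of "P (Suc (r k))"] by linarith
  qed
  then have "bounded (range (\<lambda>k. P (Suc (r k))))"
    by (intro boundedI) auto
  then obtain g Pp where "strict_mono g" "((\<lambda>k. P (Suc (r k))) \<circ> g) \<longlonglongrightarrow> Pp"
    using bounded_imp_convergent_subsequence by blast
  then show ?thesis
    using that by (simp add: o_def)
qed

lemma D_block_minimal:
  assumes e: "e \<in> D_set"
  shows "f (Ps, ds, Ts) \<le> f (Ps, e, Ts)"
proof -
  obtain g Pp where g: "strict_mono g" and lim_Pp: "(\<lambda>k. P (Suc (r (g k)))) \<longlonglongrightarrow> Pp"
    by (rule Phi_step_subseq_converges)
  have lim_D': "(\<lambda>k. D (r (g k))) \<longlonglongrightarrow> ds" and lim_T': "(\<lambda>k. T (r (g k))) \<longlonglongrightarrow> Ts"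
    using LIMSEQ_subseq_LIMSEQ[OF lim_D g] LIMSEQ_subseq_LIMSEQ[OF lim_T g] by (simp_all add: o_def)
  have "Pp \<in> Phi_set"
    by (rule closed_sequentially[OF closed_Phi_set _ lim_Pp]) (simp add: in_dom)
  moreover have "f (Pp, ds, Ts) \<le> f (Q, ds, Ts)" if "Q \<in> Phi_set" for Q
  proof (rule tendsto_le)
    show "(\<lambda>k. f (P (Suc (r (g k))), D (r (g k)), T (r (g k)))) \<longlonglongrightarrow> f (Pp, ds, Ts)"
      "(\<lambda>k. f (Q, D (r (g k)), T (r (g k)))) \<longlonglongrightarrow> f (Q, ds, Ts)"
      using lim_Pp lim_D' lim_T' det_diag_ds_pos det_Ts_pos by (auto intro!: tendsto_objective)
    show "eventually (\<lambda>k. f (P (Suc (r (g k))), D (r (g k)), T (r (g k))) \<le> f (Q, D (r (g k)), T (r (g k)))) sequentially"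
      using Phi_step(2)[OF that] by simp
  qed simp
  ultimately have "f (Pp, e, Ts) = f (Ps, e, Ts)"
    using Ps_in_Phi_set Phi_block_minimal Ts_in_Theta_set lam1_pos
    by (intro Phi_minimizers_agree[where d = ds]) (simp_all add: Theta_set_def)
  moreover have "f (Ps, ds, Ts) \<le> f (Pp, e, Ts)"
  proof (rule tendsto_lowerbound)
    have "0 < det (diag_mat e)" using e by (simp add: det_diag_mat D_set_def prod_pos)
    then show "(\<lambda>k. f (P (Suc (r (g k))), e, T (r (g k)))) \<longlonglongrightarrow> f (Pp, e, Ts)"
      using lim_Pp lim_T' det_Ts_pos by (intro tendsto_objective) auto
    show "eventually (\<lambda>k. f (Ps, ds, Ts) \<le> f (P (Suc (r (g k))), e, T (r (g k)))) sequentially"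
      by (intro always_eventually allI order_trans[OF limit_le_before_Theta_step D_step(2)[OF e]])
  qed simp
  ultimately show ?thesis by simp
qed

lemma limit_stationary: "stationary_point X lam1 lam2 A (Ps, ds, Ts)"
  using limit_in_dom Phi_block_minimal D_block_minimal Theta_block_minimal
  by (intro stationary_point_if_blockwise_minimal) simp_all

end

lemma (in bcd_run) cluster_point_stationary:
  assumes "cluster_point (\<lambda>t. (P t, D t, T t)) z"
  shows "stationary_point X lam1 lam2 A z"
proof -
  obtain r where r: "strict_mono r" and lim: "(\<lambda>k. (P (r k), D (r k), T (r k))) \<longlonglongrightarrow> z"
    using assms unfolding cluster_point_def by (auto simp: o_def)
  obtain Ps ds Ts where z: "z = (Ps, ds, Ts)" by (cases z)
  interpret bcd_limit X lam1 lam2 A P D T r Ps ds Ts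
    using r tendsto_fst[OF lim] tendsto_fst[OF tendsto_snd[OF lim]] tendsto_snd[OF tendsto_snd[OF lim]]
    by unfold_locales (simp_all add: z)
  show ?thesis
    unfolding z by (rule limit_stationary)
qed

theorem proposition1:
  fixes A :: "real^'n^'n" and lam1 lam2 :: real
  assumes "transpose A = A"
    and "\<forall>i j. A $ i $ j \<in> {0, 1}"
    and "lam1 > 0" and "lam2 > 0"
  shows "AE X in (lborel :: (real^'p::{finite,linorder}^'n) measure).
           \<forall>s. bcd_sequence X lam1 lam2 A s \<longrightarrow>
             (\<forall>z. cluster_point s z \<longrightarrow> stationary_point X lam1 lam2 A z)"
proof (intro AE_I2 allI impI)
  fix X :: "real^'p::{finite,linorder}^'n" and s z
  assume bcd: "bcd_sequence X lam1 lam2 A s" and "cluster_point s z"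
  have s: "s = (\<lambda>t. (fst (s t), fst (snd (s t)), snd (snd (s t))))"
    by simp
  interpret bcd_run X lam1 lam2 A "\<lambda>t. fst (s t)" "\<lambda>t. fst (snd (s t))" "\<lambda>t. snd (snd (s t))"
    using assms(3,4) bcd by unfold_locales (simp_all flip: s)
  show "stationary_point X lam1 lam2 A z"
    using \<open>cluster_point s z\<close> s cluster_point_stationary by metis
qed

end
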